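(* Let $f\colon\mathbb{R}^k_+\to\operatorname{int}(\mathbb{R}^k_+)$ be continuous and concave with respect to the cone order, with a fixed point $x^\star\in\operatorname{int}(\mathbb{R}^k_+)$. Let $U\subset\operatorname{int}(\mathbb{R}^k_+)$ be a compact neighborhood of $x^\star$, and let $c\in[0,1)$ be a local contraction factor of $f$ on $U$, i.e., $d_T(f(x),f(y))\le c\,d_T(x,y)$ for all $x,y\in U$. Let $\rho=\rho(f_\infty)$ be the spectral radius of the asymptotic mapping of $f$. Then $c\ge\rho$.
   Context: $\mathbb{R}^k_+$ is the nonnegative orthant, $\operatorname{int}(\mathbb{R}^k_+)$ the vectors with strictly positive coordinates, $x\le y$ means $y-x\in\mathbb{R}^k_+$. Concavity w.r.t. the cone order: $f(tx+(1-t)y)\ge tf(x)+(1-t)f(y)$ for $x,y\in\mathbb{R}^k_+$, $t\in(0,1)$. Thompson's metric: $d_T(x,y)=\ln\max\{M(x,y),M(y,x)\}$, $M(x,y)=\inf\{\beta>0:x\le\beta y\}$. The asymptotic mapping of $f$ is $f_\infty\colon\mathbb{R}^k_+\to\mathbb{R}^k_+$, $f_\infty(x)=\lim_{p\to\infty}\frac1p f(px)$ (this limit exists for such $f$), and its spectral radius is $\rho(f_\infty)=\max\{\lambda\ge 0: \exists x\in\mathbb{R}^k_+\setminus\{0\},\ f_\infty(x)=\lambda x\}$ (this maximum exists). Compactness and neighborhoods refer to the usual topology of $\mathbb{R}^k$. *)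

theory Defs
  imports "HOL-Analysis.Analysis"
begin

definition nonneg_orthant :: "(real^'k) set" where
  "nonneg_orthant = {x. \<forall>i. 0 \<le> x $ i}"

definition pos_orthant :: "(real^'k) set" where
  "pos_orthant = {x. \<forall>i. 0 < x $ i}"

definition cone_le :: "real^'k \<Rightarrow> real^'k \<Rightarrow> bool" where
  "cone_le x y \<longleftrightarrow> y - x \<in> nonneg_orthant"

definition cone_concave :: "(real^'k \<Rightarrow> real^'k) \<Rightarrow> bool" where
  "cone_concave f \<longleftrightarrow> (\<forall>x\<in>nonneg_orthant. \<forall>y\<in>nonneg_orthant. \<forall>t::real. 0 < t \<and> t < 1 \<longrightarrow>
      cone_le (t *\<^sub>R f x + (1 - t) *\<^sub>R f y) (f (t *\<^sub>R x + (1 - t) *\<^sub>R y)))"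

definition M_fun :: "real^'k \<Rightarrow> real^'k \<Rightarrow> real" where
  "M_fun x y = Inf {\<beta>. \<beta> > 0 \<and> cone_le x (\<beta> *\<^sub>R y)}"

definition thompson :: "real^'k \<Rightarrow> real^'k \<Rightarrow> real" where
  "thompson x y = ln (max (M_fun x y) (M_fun y x))"

definition asymptotic_map :: "(real^'k \<Rightarrow> real^'k) \<Rightarrow> real^'k \<Rightarrow> real^'k" where
  "asymptotic_map f x = Lim at_top (\<lambda>p::real. (1 / p) *\<^sub>R f (p *\<^sub>R x))"

definition cone_spectral_radius :: "(real^'k \<Rightarrow> real^'k) \<Rightarrow> real" where
  "cone_spectral_radius g = (GREATEST l. l \<ge> 0 \<and>
      (\<exists>x\<in>nonneg_orthant. x \<noteq> 0 \<and> g x = l *\<^sub>R x))"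

end

theory Submission
  imports Defs
begin

text \<open>
  Concavity of \<open>f\<close> on the cone gives \<open>f(x + t v) \<ge> f(x) + t f\<^sub>\<infinity>(v)\<close>. Let \<open>f\<^sub>\<infinity>(v) = \<lambda> v\<close>
  with \<open>v \<ge> 0\<close>, \<open>v \<noteq> 0\<close>, and put \<open>y = x\<^sup>\<star> + t v\<close> with \<open>t > 0\<close> so small that \<open>y \<in> U\<close>.
  With \<open>m = max\<^sub>i v\<^sub>i / x\<^sup>\<star>\<^sub>i\<close> one gets \<open>d\<^sub>T(y, x\<^sup>\<star>) \<le> ln(1 + t m)\<close> and
  \<open>d\<^sub>T(f y, x\<^sup>\<star>) \<ge> ln(1 + t \<lambda> m)\<close>, so the contraction property and the concavity of \<open>ln\<close> yield
  \<open>ln(1 + t \<lambda> m) \<le> c ln(1 + t m) \<le> ln(1 + c t m)\<close>, that is \<open>\<lambda> \<le> c\<close>.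

  For \<open>\<rho>(f\<^sub>\<infinity>)\<close> to be the greatest eigenvalue, the set of eigenvalues must also be shown
  nonempty and closed. Here \<open>f\<^sub>\<infinity>(x)\<close> is the infimum of the decreasing family \<open>f(p x)/p\<close>, and
  limits of approximate eigenvectors on the simplex are eigenvectors; eigenvectors of
  the maps \<open>x \<mapsto> f(p x)\<close>, obtained from Brouwer's theorem, become approximate eigenvectors
  of \<open>f\<^sub>\<infinity>\<close> as \<open>p \<rightarrow> \<infinity>\<close>.
\<close>

section \<open>The orthant and the standard simplex\<close>

lemma mem_nonneg_orthant: "x \<in> nonneg_orthant \<longleftrightarrow> (\<forall>i. 0 \<le> x $ i)"
  by (simp add: nonneg_orthant_def)

lemma mem_pos_orthant: "x \<in> pos_orthant \<longleftrightarrow> (\<forall>i. 0 < x $ i)"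
  by (simp add: pos_orthant_def)

lemma cone_le_iff: "cone_le x y \<longleftrightarrow> (\<forall>i. x $ i \<le> y $ i)"
  by (simp add: cone_le_def nonneg_orthant_def)

lemma pos_orthant_subset_nonneg_orthant: "pos_orthant \<subseteq> nonneg_orthant"
  by (auto simp: mem_pos_orthant mem_nonneg_orthant less_imp_le)

lemma scaleR_mem_nonneg_orthant: "0 \<le> a \<Longrightarrow> x \<in> nonneg_orthant \<Longrightarrow> a *\<^sub>R x \<in> nonneg_orthant"
  by (simp add: mem_nonneg_orthant)

lemma eventually_component_le_scaleR:
  fixes x :: "nat \<Rightarrow> real^'k"
  assumes lim: "x \<longlonglongrightarrow> x0" and nonneg: "\<And>n. x n \<in> nonneg_orthant" and e: "0 < e"
  shows "\<forall>\<^sub>F n in sequentially. \<forall>j. x0 $ j \<le> (1 + e) * x n $ j"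
proof (rule eventually_all_finite)
  fix j
  show "\<forall>\<^sub>F n in sequentially. x0 $ j \<le> (1 + e) * x n $ j"
  proof (cases "x0 $ j \<le> 0")
    case True
    then show ?thesis
      using nonneg e
      by (intro always_eventually allI) (auto simp: mem_nonneg_orthant intro: order_trans)
  next
    case False
    then have "x0 $ j / (1 + e) < x0 $ j"
      using e by (simp add: field_simps)
    moreover have "(\<lambda>n. x n $ j) \<longlonglongrightarrow> x0 $ j"
      using lim by (rule tendsto_vec_nth)
    ultimately have "\<forall>\<^sub>F n in sequentially. x0 $ j / (1 + e) < x n $ j"
      by (intro order_tendstoD(1))
    then show ?thesis
      by eventually_elim (use e in \<open>simp add: field_simps\<close>)
  qed
qed

definition prob_simplex :: "(real^'k) set" where
  "prob_simplex = {x. (\<forall>j. 0 \<le> x $ j) \<and> (\<Sum>j\<in>UNIV. x $ j) = 1}"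

lemma prob_simplex_subset_nonneg_orthant: "prob_simplex \<subseteq> nonneg_orthant"
  by (auto simp: prob_simplex_def mem_nonneg_orthant)

lemma prob_simplex_nonzero: "x \<in> prob_simplex \<Longrightarrow> x \<noteq> 0"
  by (auto simp: prob_simplex_def)

lemma prob_simplex_component_le_1:
  assumes "x \<in> prob_simplex"
  shows "x $ j \<le> 1"
proof -
  have "x $ j \<le> (\<Sum>j\<in>UNIV. x $ j)"
    using assms by (intro member_le_sum) (auto simp: prob_simplex_def)
  then show ?thesis
    using assms by (simp add: prob_simplex_def)
qed

lemma compact_prob_simplex: "compact (prob_simplex :: (real^'k) set)"
  unfolding compact_eq_bounded_closed
proof
  have "norm x \<le> 1" if "x \<in> prob_simplex" for x :: "real^'k"
  proof -
    have "norm x \<le> (\<Sum>i\<in>UNIV. \<bar>x $ i\<bar>)"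
      by (rule norm_le_l1_cart)
    also have "\<dots> = 1"
      using that by (simp add: prob_simplex_def)
    finally show ?thesis .
  qed
  then show "bounded (prob_simplex :: (real^'k) set)"
    by (auto simp: bounded_iff)
  show "closed (prob_simplex :: (real^'k) set)"
    unfolding prob_simplex_def
    by (intro closed_Collect_conj closed_Collect_all closed_Collect_le closed_Collect_eq
        continuous_intros)
qed

lemma convex_prob_simplex: "convex (prob_simplex :: (real^'k) set)"
  unfolding convex_def prob_simplex_def
  by (auto simp: sum.distrib sum_distrib_left[symmetric] intro!: add_nonneg_nonneg)

lemma prob_simplex_nonempty: "(prob_simplex :: (real^'k) set) \<noteq> {}"
proof -
  have "(\<chi> j. 1 / real CARD('k)) \<in> (prob_simplex :: (real^'k) set)"
    by (simp add: prob_simplex_def)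
  then show ?thesis by blast
qed

lemma normalize_mem_prob_simplex:
  assumes "x \<in> nonneg_orthant" "x \<noteq> 0"
  shows "0 < (\<Sum>j\<in>UNIV. x $ j)" "(1 / (\<Sum>j\<in>UNIV. x $ j)) *\<^sub>R x \<in> prob_simplex"
proof -
  obtain i where "x $ i \<noteq> 0"
    using assms(2) by (auto simp: vec_eq_iff)
  then show sum_pos: "0 < (\<Sum>j\<in>UNIV. x $ j)"
    using assms(1) by (intro sum_pos2[of UNIV i]) (auto simp: mem_nonneg_orthant order_le_neq_trans)
  then show "(1 / (\<Sum>j\<in>UNIV. x $ j)) *\<^sub>R x \<in> prob_simplex"
    using assms(1) by (simp add: prob_simplex_def mem_nonneg_orthant sum_divide_distrib[symmetric])
qed

lemma prob_simplex_eigenvector_exists: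
  fixes h :: "real^'k \<Rightarrow> real^'k"
  assumes cont: "continuous_on prob_simplex h"
    and pos: "\<And>x. x \<in> prob_simplex \<Longrightarrow> h x \<in> pos_orthant"
  shows "\<exists>x\<in>prob_simplex. \<exists>\<mu>>0. h x = \<mu> *\<^sub>R x"
proof -
  define S where "S x = (\<Sum>j\<in>UNIV. h x $ j)" for x
  have h_nonneg: "h x \<in> nonneg_orthant" and h_nonzero: "h x \<noteq> 0" if "x \<in> prob_simplex" for x
    using pos[OF that] pos_orthant_subset_nonneg_orthant by (auto simp: mem_pos_orthant)
  have S_pos: "0 < S x" if "x \<in> prob_simplex" for x
    unfolding S_def using normalize_mem_prob_simplex h_nonneg h_nonzero that by blast
  define \<phi> where "\<phi> x = (1 / S x) *\<^sub>R h x" for x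
  have "continuous_on prob_simplex \<phi>"
    unfolding \<phi>_def S_def
    by (intro continuous_intros cont) (use S_pos[unfolded S_def] in \<open>metis less_irrefl\<close>)
  moreover have "\<phi> \<in> prob_simplex \<rightarrow> prob_simplex"
    unfolding \<phi>_def S_def using normalize_mem_prob_simplex h_nonneg h_nonzero by blast
  ultimately obtain x where x: "x \<in> prob_simplex" "\<phi> x = x"
    using brouwer[OF compact_prob_simplex convex_prob_simplex prob_simplex_nonempty] by blast
  have "h x = S x *\<^sub>R \<phi> x"
    using S_pos[OF x(1)] by (simp add: \<phi>_def)
  then have "h x = S x *\<^sub>R x"
    using x(2) by simp
  then show ?thesis
    using x(1) S_pos by blast
qed

section \<open>Thompson's metric\<close>

lemma le_of_ln_le_mult_ln:
  fixes a c l :: real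
  assumes c: "0 \<le> c" "c \<le> 1" and a: "0 < a" and l: "0 \<le> l"
    and le: "ln (1 + l * a) \<le> c * ln (1 + a)"
  shows "l \<le> c"
proof -
  have "c * ln (1 + a) \<le> ln (1 + c * a)"
    using concave_onD[OF ln_concave, of c 1 "1 + a"] c a by (simp add: algebra_simps)
  with le have "ln (1 + l * a) \<le> ln (1 + c * a)"
    by linarith
  then have "l * a \<le> c * a"
    using a c l by (simp add: add_pos_nonneg)
  then show ?thesis
    using a by simp
qed

lemma M_fun_le: "0 < \<beta> \<Longrightarrow> cone_le x (\<beta> *\<^sub>R y) \<Longrightarrow> M_fun x y \<le> \<beta>"
  unfolding M_fun_def by (rule cInf_lower) (auto intro!: bdd_belowI[of _ 0])

lemma ratio_le_M_fun:
  assumes y: "y \<in> pos_orthant" and x: "x \<in> nonneg_orthant"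
  shows "x $ i / y $ i \<le> M_fun x y"
  unfolding M_fun_def
proof (rule cInf_greatest)
  define b where "b = (\<Sum>j\<in>UNIV. x $ j / y $ j) + 1"
  have ratio_nonneg: "0 \<le> x $ j / y $ j" for j
    using x y by (simp add: mem_nonneg_orthant mem_pos_orthant less_imp_le)
  then have "0 < b"
    by (simp add: b_def sum_nonneg add_nonneg_pos)
  moreover have "cone_le x (b *\<^sub>R y)"
    unfolding cone_le_iff
  proof
    fix j
    have "x $ j / y $ j \<le> b"
      unfolding b_def using ratio_nonneg by (intro add_increasing2 member_le_sum) auto
    then show "x $ j \<le> (b *\<^sub>R y) $ j"
      using y by (simp add: mem_pos_orthant pos_divide_le_eq)
  qed
  ultimately show "{\<beta>. 0 < \<beta> \<and> cone_le x (\<beta> *\<^sub>R y)} \<noteq> {}"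
    by blast
  show "x $ i / y $ i \<le> \<beta>" if "\<beta> \<in> {\<beta>. 0 < \<beta> \<and> cone_le x (\<beta> *\<^sub>R y)}" for \<beta>
    using that y by (auto simp: cone_le_iff mem_pos_orthant divide_le_eq)
qed

lemma thompson_le:
  assumes x: "x \<in> pos_orthant" and y: "y \<in> pos_orthant" and a: "0 < a"
    and "cone_le x (a *\<^sub>R y)" "cone_le y (a *\<^sub>R x)"
  shows "thompson x y \<le> ln a"
proof -
  have "0 < x $ i / y $ i" for i
    using x y by (simp add: mem_pos_orthant)
  moreover have "x $ i / y $ i \<le> M_fun x y" for i
    using x y pos_orthant_subset_nonneg_orthant by (intro ratio_le_M_fun) auto
  ultimately have "0 < M_fun x y"
    by (rule less_le_trans)
  moreover have "max (M_fun x y) (M_fun y x) \<le> a"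
    using assms by (simp add: M_fun_le)
  ultimately show ?thesis
    unfolding thompson_def using a by simp
qed

lemma ln_le_thompson:
  assumes "x \<in> nonneg_orthant" "y \<in> pos_orthant" "0 < a" "a * y $ i \<le> x $ i"
  shows "ln a \<le> thompson x y"
proof -
  have "a \<le> x $ i / y $ i"
    using assms by (simp add: mem_pos_orthant le_divide_eq)
  also have "\<dots> \<le> M_fun x y"
    using assms by (intro ratio_le_M_fun)
  finally show ?thesis
    unfolding thompson_def using \<open>0 < a\<close> by simp
qed

lemma thompson_add_le:
  assumes x: "x \<in> pos_orthant" and v: "v \<in> nonneg_orthant" and t: "0 \<le> t" and m: "0 \<le> m"
    and v_le: "\<And>i. v $ i \<le> m * x $ i"
  shows "thompson (x + t *\<^sub>R v) x \<le> ln (1 + t * m)"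
proof (rule thompson_le[OF _ x])
  have "t * v $ i \<le> t * m * x $ i" for i
    using mult_left_mono[OF v_le t] by (simp add: mult.assoc)
  then show "cone_le (x + t *\<^sub>R v) ((1 + t * m) *\<^sub>R x)"
    by (simp add: cone_le_iff algebra_simps)
  have "x $ i \<le> (1 + t * m) * (x $ i + t * v $ i)" for i
  proof -
    have "0 \<le> t * v $ i" "0 \<le> x $ i"
      using x v t by (simp_all add: mem_pos_orthant mem_nonneg_orthant less_imp_le)
    then have "x $ i \<le> x $ i + t * v $ i" "0 \<le> t * m * (x $ i + t * v $ i)"
      using t m by simp_all
    then show ?thesis
      by (simp add: distrib_right)
  qed
  then show "cone_le x ((1 + t * m) *\<^sub>R (x + t *\<^sub>R v))"
    by (simp add: cone_le_iff)
qed (use x v t m in \<open>auto simp: mem_pos_orthant mem_nonneg_orthant add_pos_nonneg\<close>)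

lemma max_ratio_exists:
  assumes x: "x \<in> pos_orthant" and v: "v \<in> nonneg_orthant" "v \<noteq> 0"
  shows "\<exists>m>0. \<exists>j. (\<forall>i. v $ i \<le> m * x $ i) \<and> v $ j = m * x $ j"
proof -
  define m where "m = Max (range (\<lambda>i. v $ i / x $ i))"
  have x_i: "0 < x $ i" for i
    using x by (simp add: mem_pos_orthant)
  have "m \<in> range (\<lambda>i. v $ i / x $ i)"
    unfolding m_def by (rule Max_in) auto
  then obtain j where "m = v $ j / x $ j"
    by blast
  then have "v $ j = m * x $ j"
    using x_i[of j] by simp
  moreover have v_le: "v $ i \<le> m * x $ i" for i
  proof -
    have "v $ i / x $ i \<le> m"
      unfolding m_def by (rule Max_ge) auto
    then show ?thesis
      using x_i[of i] by (simp add: divide_le_eq)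
  qed
  moreover have "0 < m"
  proof -
    obtain i where "v $ i \<noteq> 0"
      using v(2) by (auto simp: vec_eq_iff)
    then have "0 < v $ i"
      using v(1) by (simp add: mem_nonneg_orthant order_le_neq_trans)
    then have "0 < m * x $ i"
      using v_le[of i] by linarith
    then show ?thesis
      using x_i[of i] by (simp add: zero_less_mult_iff)
  qed
  ultimately show ?thesis
    by blast
qed

definition cone_eigenvalues :: "(real^'k \<Rightarrow> real^'k) \<Rightarrow> real set" where
  "cone_eigenvalues g = {l. 0 \<le> l \<and> (\<exists>x\<in>nonneg_orthant. x \<noteq> 0 \<and> g x = l *\<^sub>R x)}"

lemma cone_spectral_radius_le:
  assumes closed: "closed (cone_eigenvalues g)" and nonempty: "cone_eigenvalues g \<noteq> {}"
    and le: "\<And>l. l \<in> cone_eigenvalues g \<Longrightarrow> l \<le> c"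
  shows "cone_spectral_radius g \<le> c"
proof -
  have bdd: "bdd_above (cone_eigenvalues g)"
    using le by (rule bdd_aboveI)
  then have Sup_mem: "Sup (cone_eigenvalues g) \<in> cone_eigenvalues g"
    using closed nonempty closed_contains_Sup by blast
  have "cone_spectral_radius g = Sup (cone_eigenvalues g)"
    unfolding cone_spectral_radius_def
  proof (rule Greatest_equality)
    show "0 \<le> Sup (cone_eigenvalues g) \<and>
        (\<exists>x\<in>nonneg_orthant. x \<noteq> 0 \<and> g x = Sup (cone_eigenvalues g) *\<^sub>R x)"
      using Sup_mem by (simp add: cone_eigenvalues_def)
    show "l \<le> Sup (cone_eigenvalues g)"
      if "0 \<le> l \<and> (\<exists>x\<in>nonneg_orthant. x \<noteq> 0 \<and> g x = l *\<^sub>R x)" for l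
      using that bdd by (intro cSup_upper) (simp_all add: cone_eigenvalues_def)
  qed
  with Sup_mem le show ?thesis by simp
qed

section \<open>Concave maps into the interior of the cone\<close>

lemma tendsto_INF_at_top_antimono:
  fixes h :: "real \<Rightarrow> real"
  assumes anti: "\<And>p q. 0 < q \<Longrightarrow> q \<le> p \<Longrightarrow> h p \<le> h q"
    and bdd: "\<And>p. 0 < p \<Longrightarrow> b \<le> h p"
  shows "(h \<longlongrightarrow> (INF p\<in>{0<..}. h p)) at_top"
proof (rule decreasing_tendsto)
  have "bdd_below (h ` {0<..})"
    by (rule bdd_belowI2[of _ b]) (simp add: bdd)
  show "\<forall>\<^sub>F p in at_top. (INF p\<in>{0<..}. h p) \<le> h p"
    using eventually_gt_at_top[of 0]
    by eventually_elim (use \<open>bdd_below (h ` {0<..})\<close> in \<open>auto intro: cINF_lower\<close>)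
next
  fix y assume "(INF p\<in>{0<..}. h p) < y"
  then obtain p0 where p0: "0 < p0" "h p0 < y"
    using cInf_lessD[of "h ` {0<..}"] by auto
  show "\<forall>\<^sub>F p in at_top. h p < y"
    using eventually_ge_at_top[of p0]
    by eventually_elim (use anti p0 in \<open>fastforce intro: le_less_trans\<close>)
qed

locale positive_concave_map =
  fixes f :: "real^'k \<Rightarrow> real^'k"
  assumes maps_to_pos_orthant: "\<forall>x\<in>nonneg_orthant. f x \<in> pos_orthant"
    and continuous: "continuous_on nonneg_orthant f"
    and concave: "cone_concave f"
begin

abbreviation f_inf :: "real^'k \<Rightarrow> real^'k" where
  "f_inf \<equiv> asymptotic_map f"

lemma pos_component: "x \<in> nonneg_orthant \<Longrightarrow> 0 < f x $ i"
  using maps_to_pos_orthant by (auto simp: mem_pos_orthant)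

lemma concave_component:
  assumes "x \<in> nonneg_orthant" "y \<in> nonneg_orthant" "0 < t" "t < 1"
  shows "t * f x $ i + (1 - t) * f y $ i \<le> f (t *\<^sub>R x + (1 - t) *\<^sub>R y) $ i"
  using concave assms unfolding cone_concave_def cone_le_iff by auto

text \<open>If \<open>f y\<close> were smaller than \<open>f x\<close> in some coordinate, concavity along the ray from
  \<open>x\<close> through \<open>y\<close>, evaluated at a point \<open>z\<close> beyond \<open>y\<close>, would make that coordinate of
  \<open>f z\<close> negative.\<close>

lemma mono_component:
  assumes x: "x \<in> nonneg_orthant" and le: "\<And>j. x $ j \<le> y $ j"
  shows "f x $ i \<le> f y $ i"
proof (rule ccontr)
  assume "\<not> ?thesis"
  then have lt: "f y $ i < f x $ i" by simp
  have y: "y \<in> nonneg_orthant"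
    using x le by (auto simp: mem_nonneg_orthant intro: order_trans)
  define t where "t = (f x $ i - f y $ i) / (2 * f x $ i)"
  have t: "0 < t" "t < 1"
    using lt pos_component[OF x, of i] pos_component[OF y, of i]
    by (simp_all add: t_def field_simps)
  define z where "z = x + (1 / t) *\<^sub>R (y - x)"
  have z: "z \<in> nonneg_orthant"
    using x le t by (auto simp: mem_nonneg_orthant z_def intro!: add_nonneg_nonneg)
  have "t *\<^sub>R z + (1 - t) *\<^sub>R x = y"
    using t by (simp add: z_def algebra_simps)
  then have "t * f z $ i + (1 - t) * f x $ i \<le> f y $ i"
    using concave_component[OF z x t] by simp
  moreover have "0 < t * f z $ i"
    using t pos_component[OF z] by simp
  moreover have "(1 - t) * f x $ i = (f x $ i + f y $ i) / 2"
    using pos_component[OF x, of i] by (simp add: t_def field_simps)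
  ultimately have "(f x $ i + f y $ i) / 2 < f y $ i"
    by linarith
  with lt show False
    by simp
qed

lemma scaled_antimono:
  assumes x: "x \<in> nonneg_orthant" and "0 < q" "q \<le> p"
  shows "f (p *\<^sub>R x) $ i / p \<le> f (q *\<^sub>R x) $ i / q"
proof (cases "q = p")
  case False
  then have qp: "0 < q / p" "q / p < 1"
    using assms by simp_all
  have zero: "(0 :: real^'k) \<in> nonneg_orthant"
    by (simp add: mem_nonneg_orthant)
  have "(q / p) *\<^sub>R (p *\<^sub>R x) + (1 - q / p) *\<^sub>R 0 = q *\<^sub>R x"
    using assms by simp
  then have "(q / p) * f (p *\<^sub>R x) $ i + (1 - q / p) * f 0 $ i \<le> f (q *\<^sub>R x) $ i"
    using concave_component[OF scaleR_mem_nonneg_orthant[OF _ x] zero qp, of p i] assms by simp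
  moreover have "0 < (1 - q / p) * f 0 $ i"
    using qp pos_component[OF zero] by simp
  ultimately have "(q / p) * f (p *\<^sub>R x) $ i \<le> f (q *\<^sub>R x) $ i"
    by linarith
  then show ?thesis
    using assms by (simp add: field_simps)
qed simp

lemma asymptotic_map_eq_INF:
  assumes x: "x \<in> nonneg_orthant"
  shows "f_inf x $ i = (INF p\<in>{0<..}. f (p *\<^sub>R x) $ i / p)"
proof -
  have "((\<lambda>p. (1 / p) *\<^sub>R f (p *\<^sub>R x)) \<longlongrightarrow> (\<chi> i. INF p\<in>{0<..}. f (p *\<^sub>R x) $ i / p)) at_top"
  proof (rule vec_tendstoI)
    fix i
    have "((\<lambda>p. f (p *\<^sub>R x) $ i / p) \<longlongrightarrow> (INF p\<in>{0<..}. f (p *\<^sub>R x) $ i / p)) at_top"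
      using scaled_antimono[OF x] x
      by (intro tendsto_INF_at_top_antimono[where b = 0])
        (auto intro!: divide_nonneg_pos less_imp_le[OF pos_component] scaleR_mem_nonneg_orthant)
    then show "((\<lambda>p. ((1 / p) *\<^sub>R f (p *\<^sub>R x)) $ i) \<longlongrightarrow>
        (\<chi> i. INF p\<in>{0<..}. f (p *\<^sub>R x) $ i / p) $ i) at_top"
      by simp
  qed
  then show ?thesis
    unfolding asymptotic_map_def by (simp add: tendsto_Lim)
qed

lemma asymptotic_map_le_scaled:
  assumes "x \<in> nonneg_orthant" "0 < p"
  shows "f_inf x $ i \<le> f (p *\<^sub>R x) $ i / p"
  unfolding asymptotic_map_eq_INF[OF assms(1)] using assms
  by (intro cINF_lower bdd_belowI2[where m = 0])
    (auto intro!: divide_nonneg_pos less_imp_le[OF pos_component] scaleR_mem_nonneg_orthant)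

lemma le_asymptotic_map:
  assumes "x \<in> nonneg_orthant" "\<And>p. 0 < p \<Longrightarrow> b \<le> f (p *\<^sub>R x) $ i / p"
  shows "b \<le> f_inf x $ i"
  unfolding asymptotic_map_eq_INF[OF assms(1)] using assms(2) by (intro cINF_greatest) auto

lemma asymptotic_map_mono:
  assumes x: "x \<in> nonneg_orthant" and le: "\<And>j. x $ j \<le> y $ j"
  shows "f_inf x $ i \<le> f_inf y $ i"
proof (rule le_asymptotic_map)
  show y: "y \<in> nonneg_orthant"
    using x le by (auto simp: mem_nonneg_orthant intro: order_trans)
  fix p :: real assume p: "0 < p"
  have "f_inf x $ i \<le> f (p *\<^sub>R x) $ i / p"
    using x p by (rule asymptotic_map_le_scaled)
  also have "\<dots> \<le> f (p *\<^sub>R y) $ i / p"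
    using x le p by (intro divide_right_mono mono_component scaleR_mem_nonneg_orthant) auto
  finally show "f_inf x $ i \<le> f (p *\<^sub>R y) $ i / p" .
qed

lemma asymptotic_map_scaleR:
  assumes x: "x \<in> nonneg_orthant" and a: "0 < a"
  shows "f_inf (a *\<^sub>R x) = a *\<^sub>R f_inf x"
proof -
  have ax: "a *\<^sub>R x \<in> nonneg_orthant"
    using x a by (simp add: scaleR_mem_nonneg_orthant)
  have "f_inf (a *\<^sub>R x) $ i = a * f_inf x $ i" for i
  proof (rule antisym)
    have "f_inf (a *\<^sub>R x) $ i / a \<le> f_inf x $ i"
    proof (rule le_asymptotic_map[OF x])
      fix p :: real assume p: "0 < p"
      have "f_inf (a *\<^sub>R x) $ i \<le> f ((p / a) *\<^sub>R (a *\<^sub>R x)) $ i / (p / a)"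
        using ax p a by (intro asymptotic_map_le_scaled) auto
      then show "f_inf (a *\<^sub>R x) $ i / a \<le> f (p *\<^sub>R x) $ i / p"
        using a by (simp add: field_simps)
    qed
    then show "f_inf (a *\<^sub>R x) $ i \<le> a * f_inf x $ i"
      using a by (simp add: field_simps)
  next
    show "a * f_inf x $ i \<le> f_inf (a *\<^sub>R x) $ i"
    proof (rule le_asymptotic_map[OF ax])
      fix p :: real assume p: "0 < p"
      have "f_inf x $ i \<le> f ((p * a) *\<^sub>R x) $ i / (p * a)"
        using x p a by (intro asymptotic_map_le_scaled) auto
      then show "a * f_inf x $ i \<le> f (p *\<^sub>R (a *\<^sub>R x)) $ i / p"
        using a p by (simp add: field_simps)
    qed
  qed
  then show ?thesis
    by (simp add: vec_eq_iff)
qed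

lemma limit_le_asymptotic_map:
  assumes x: "\<And>n. x n \<in> nonneg_orthant" and x0: "x0 \<in> nonneg_orthant"
    and x_lim: "x \<longlonglongrightarrow> x0" and y_lim: "y \<longlonglongrightarrow> y0"
    and below: "\<And>q. 0 < q \<Longrightarrow> \<forall>\<^sub>F n in sequentially. \<forall>i. y n $ i \<le> f (q *\<^sub>R x n) $ i / q"
  shows "y0 $ i \<le> f_inf x0 $ i"
proof (rule le_asymptotic_map[OF x0])
  fix q :: real assume q: "0 < q"
  have f_lim: "(\<lambda>n. f (q *\<^sub>R x n)) \<longlonglongrightarrow> f (q *\<^sub>R x0)"
    using x x0 q
    by (intro continuous_on_tendsto_compose[OF continuous] tendsto_intros x_lim)
      (auto intro!: always_eventually scaleR_mem_nonneg_orthant)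
  have "(\<lambda>n. f (q *\<^sub>R x n) $ i / q) \<longlonglongrightarrow> f (q *\<^sub>R x0) $ i / q"
    using q by (intro tendsto_divide tendsto_vec_nth[OF f_lim] tendsto_const) simp
  then show "y0 $ i \<le> f (q *\<^sub>R x0) $ i / q"
    by (rule tendsto_le[OF trivial_limit_sequentially _ tendsto_vec_nth[OF y_lim]])
      (use below[OF q] in \<open>auto elim: eventually_mono\<close>)
qed

lemma asymptotic_map_le_limit:
  assumes x: "\<And>n. x n \<in> nonneg_orthant" and x0: "x0 \<in> nonneg_orthant"
    and x_lim: "x \<longlonglongrightarrow> x0" and y_lim: "y \<longlonglongrightarrow> y0"
    and above: "\<And>n i. f_inf (x n) $ i \<le> y n $ i"
  shows "f_inf x0 $ i \<le> y0 $ i"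
proof -
  have scaled: "f_inf x0 $ i \<le> (1 + e) * y0 $ i" if e: "0 < e" for e
  proof (rule tendsto_lowerbound)
    show "(\<lambda>n. (1 + e) * y n $ i) \<longlonglongrightarrow> (1 + e) * y0 $ i"
      by (intro tendsto_intros tendsto_vec_nth[OF y_lim])
    show "\<forall>\<^sub>F n in sequentially. f_inf x0 $ i \<le> (1 + e) * y n $ i"
      using eventually_component_le_scaleR[OF x_lim x e]
    proof eventually_elim
      case (elim n)
      have "f_inf x0 $ i \<le> f_inf ((1 + e) *\<^sub>R x n) $ i"
        using elim x0 by (intro asymptotic_map_mono) auto
      also have "\<dots> = (1 + e) * f_inf (x n) $ i"
        using asymptotic_map_scaleR[OF x, of "1 + e"] e by simp
      also have "\<dots> \<le> (1 + e) * y n $ i"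
        using above e by (intro mult_left_mono) auto
      finally show ?case .
    qed
  qed simp
  have "((\<lambda>e. (1 + e) * y0 $ i) \<longlongrightarrow> (1 + 0) * y0 $ i) (at_right 0)"
    by (intro tendsto_intros)
  then show ?thesis
    using scaled
    by (intro tendsto_lowerbound) (auto intro: eventually_mono[OF eventually_at_right_less])
qed

lemma asymptotic_map_limit:
  assumes "\<And>n. x n \<in> nonneg_orthant" "x0 \<in> nonneg_orthant" "x \<longlonglongrightarrow> x0" "y \<longlonglongrightarrow> y0"
    and "\<And>n i. f_inf (x n) $ i \<le> y n $ i"
    and "\<And>q. 0 < q \<Longrightarrow> \<forall>\<^sub>F n in sequentially. \<forall>i. y n $ i \<le> f (q *\<^sub>R x n) $ i / q"
  shows "f_inf x0 = y0"
  using limit_le_asymptotic_map[OF assms(1-4,6)] asymptotic_map_le_limit[OF assms(1-5)]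
  by (simp add: vec_eq_iff order_antisym)

lemma eigenpair_limit:
  assumes mem: "\<And>n. lam n \<in> {0..B}" "\<And>n. x n \<in> prob_simplex"
    and above: "\<And>n i. f_inf (x n) $ i \<le> lam n * x n $ i"
    and below: "\<And>q. 0 < q \<Longrightarrow> \<forall>\<^sub>F n in sequentially. \<forall>i. lam n * x n $ i \<le> f (q *\<^sub>R x n) $ i / q"
  obtains r l x0 where "strict_mono r" "(lam \<circ> r) \<longlonglongrightarrow> l" "l \<in> {0..B}"
    "x0 \<in> prob_simplex" "f_inf x0 = l *\<^sub>R x0"
proof -
  have "seq_compact ({0..B} \<times> (prob_simplex :: (real^'k) set))"
    by (intro compact_imp_seq_compact compact_Times compact_prob_simplex compact_Icc)
  moreover have "\<forall>n. (lam n, x n) \<in> {0..B} \<times> prob_simplex"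
    using mem by simp
  ultimately obtain lx r where lx: "lx \<in> {0..B} \<times> prob_simplex" and r: "strict_mono r"
    and lim: "((\<lambda>n. (lam n, x n)) \<circ> r) \<longlonglongrightarrow> lx"
    by (rule seq_compactE)
  obtain l x0 where lx_eq: "lx = (l, x0)"
    by fastforce
  have lam_lim: "(lam \<circ> r) \<longlonglongrightarrow> l" and x_lim: "(x \<circ> r) \<longlonglongrightarrow> x0"
    using tendsto_fst[OF lim] tendsto_snd[OF lim] by (simp_all add: lx_eq o_def)
  have "f_inf x0 = l *\<^sub>R x0"
  proof (rule asymptotic_map_limit[OF _ _ x_lim])
    show "x0 \<in> nonneg_orthant" "(x \<circ> r) n \<in> nonneg_orthant" for n
      using lx lx_eq mem prob_simplex_subset_nonneg_orthant by auto
    show "(\<lambda>n. (lam \<circ> r) n *\<^sub>R (x \<circ> r) n) \<longlonglongrightarrow> l *\<^sub>R x0"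
      by (intro tendsto_intros lam_lim x_lim)
    show "f_inf ((x \<circ> r) n) $ i \<le> ((lam \<circ> r) n *\<^sub>R (x \<circ> r) n) $ i" for n i
      using above by simp
    show "\<forall>\<^sub>F n in sequentially. \<forall>i. ((lam \<circ> r) n *\<^sub>R (x \<circ> r) n) $ i \<le> f (q *\<^sub>R (x \<circ> r) n) $ i / q"
      if "0 < q" for q
      using eventually_subseq[OF r below[OF that]] by simp
  qed
  then show ?thesis
    using lx lx_eq by (intro that[OF r lam_lim]) auto
qed

lemma scaled_eigenvector_exists:
  assumes "0 < p"
  shows "\<exists>x\<in>prob_simplex. \<exists>\<mu>>0. f (p *\<^sub>R x) = \<mu> *\<^sub>R x"
proof (rule prob_simplex_eigenvector_exists)
  show "continuous_on prob_simplex (\<lambda>x. f (p *\<^sub>R x))"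
    using assms prob_simplex_subset_nonneg_orthant
    by (intro continuous_on_compose2[OF continuous] continuous_intros)
      (auto intro: scaleR_mem_nonneg_orthant)
  show "f (p *\<^sub>R x) \<in> pos_orthant" if "x \<in> prob_simplex" for x
  proof -
    have "p *\<^sub>R x \<in> nonneg_orthant"
      using that assms prob_simplex_subset_nonneg_orthant
      by (auto intro!: scaleR_mem_nonneg_orthant)
    then show ?thesis
      using maps_to_pos_orthant by blast
  qed
qed

lemma scaled_le_at_ones:
  assumes x: "x \<in> prob_simplex" and p: "1 \<le> p"
  shows "f (p *\<^sub>R x) $ j / p \<le> f (\<chi> i. 1) $ j"
proof -
  have ones: "((\<chi> i. 1) :: real^'k) \<in> nonneg_orthant"
    by (simp add: mem_nonneg_orthant)
  have "f (p *\<^sub>R x) $ j \<le> f (p *\<^sub>R (\<chi> i. 1)) $ j"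
    using x prob_simplex_component_le_1[OF x] prob_simplex_subset_nonneg_orthant p
    by (intro mono_component scaleR_mem_nonneg_orthant) auto
  then have "f (p *\<^sub>R x) $ j / p \<le> f (p *\<^sub>R (\<chi> i. 1)) $ j / p"
    using p by (simp add: divide_right_mono)
  also have "\<dots> \<le> f (1 *\<^sub>R (\<chi> i. 1)) $ j / 1"
    using p by (intro scaled_antimono[OF ones]) auto
  finally show ?thesis
    by simp
qed

lemma asymptotic_map_eigenvalues_nonempty: "cone_eigenvalues f_inf \<noteq> {}"
proof -
  have "\<exists>x\<in>prob_simplex. \<exists>\<mu>>0. f ((real n + 1) *\<^sub>R x) = \<mu> *\<^sub>R x" for n
    by (rule scaled_eigenvector_exists) simp
  then obtain x \<mu> where x: "\<And>n. x n \<in> prob_simplex"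
    and eig: "\<And>n. f ((real n + 1) *\<^sub>R x n) = \<mu> n *\<^sub>R x n" and \<mu>: "\<And>n. 0 < \<mu> n"
    by metis
  define lam where "lam n = \<mu> n / (real n + 1)" for n
  have eig_i: "f ((real n + 1) *\<^sub>R x n) $ i / (real n + 1) = lam n * x n $ i" for n i
    by (simp add: eig lam_def)
  define B where "B = (\<Sum>j\<in>UNIV. f (\<chi> i. 1) $ j)"
  have lam_mem: "lam n \<in> {0..B}" for n
  proof -
    have "lam n = (\<Sum>j\<in>UNIV. lam n * x n $ j)"
      using x by (simp add: prob_simplex_def flip: sum_distrib_left)
    also have "\<dots> \<le> B"
      unfolding B_def using scaled_le_at_ones[OF x[of n], of "real n + 1"]
      by (intro sum_mono) (simp add: eig_i)
    finally show ?thesis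
      using \<mu> by (simp add: lam_def less_imp_le)
  qed
  have above: "f_inf (x n) $ i \<le> lam n * x n $ i" for n i
    using asymptotic_map_le_scaled[of "x n" "real n + 1" i] x prob_simplex_subset_nonneg_orthant
    by (auto simp: eig_i)
  have below: "\<forall>\<^sub>F n in sequentially. \<forall>i. lam n * x n $ i \<le> f (q *\<^sub>R x n) $ i / q"
    if q: "0 < q" for q
    using eventually_ge_at_top[of "nat \<lceil>q\<rceil>"]
  proof eventually_elim
    case (elim n)
    then have "q \<le> real n + 1"
      by linarith
    moreover have "x n \<in> nonneg_orthant"
      using x prob_simplex_subset_nonneg_orthant by blast
    ultimately show ?case
      using scaled_antimono[OF _ q] by (simp flip: eig_i)
  qed
  obtain r l x0 where "strict_mono r" "(lam \<circ> r) \<longlonglongrightarrow> l" "l \<in> {0..B}"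
    "x0 \<in> prob_simplex" "f_inf x0 = l *\<^sub>R x0"
    by (rule eigenpair_limit[OF lam_mem x above below])
  then show ?thesis
    using prob_simplex_subset_nonneg_orthant prob_simplex_nonzero
    by (auto simp: cone_eigenvalues_def)
qed

lemma cone_eigenvalue_prob_simplex_eigenvector:
  assumes "l \<in> cone_eigenvalues f_inf"
  shows "\<exists>x\<in>prob_simplex. f_inf x = l *\<^sub>R x"
proof -
  obtain v where v: "v \<in> nonneg_orthant" "v \<noteq> 0" "f_inf v = l *\<^sub>R v"
    using assms by (auto simp: cone_eigenvalues_def)
  define s where "s = (\<Sum>j\<in>UNIV. v $ j)"
  have "0 < s" "(1 / s) *\<^sub>R v \<in> prob_simplex"
    using normalize_mem_prob_simplex[OF v(1,2)] by (simp_all add: s_def)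
  moreover have "f_inf ((1 / s) *\<^sub>R v) = l *\<^sub>R ((1 / s) *\<^sub>R v)"
    using asymptotic_map_scaleR[OF v(1), of "1 / s"] v(3) \<open>0 < s\<close> by simp
  ultimately show ?thesis
    by blast
qed

lemma closed_asymptotic_map_eigenvalues: "closed (cone_eigenvalues f_inf)"
  unfolding closed_sequential_limits
proof (intro allI impI, elim conjE)
  fix lam l assume mem: "\<forall>n. lam n \<in> cone_eigenvalues f_inf" and lim: "lam \<longlonglongrightarrow> l"
  have "\<forall>n. \<exists>x. x \<in> prob_simplex \<and> f_inf x = lam n *\<^sub>R x"
    using mem cone_eigenvalue_prob_simplex_eigenvector by blast
  then obtain x where "\<forall>n. x n \<in> prob_simplex \<and> f_inf (x n) = lam n *\<^sub>R x n"
    by (rule choice[THEN exE])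
  then have x: "\<And>n. x n \<in> prob_simplex" "\<And>n. f_inf (x n) = lam n *\<^sub>R x n"
    by simp_all
  obtain B where "\<And>n. norm (lam n) \<le> B"
    using convergent_imp_Bseq[OF convergentI[OF lim]] by (elim BseqE) blast
  then have lam_mem: "lam n \<in> {0..B}" for n
    using mem by (auto simp: cone_eigenvalues_def)
  have above: "f_inf (x n) $ i \<le> lam n * x n $ i" for n i
    using x by simp
  have below: "\<forall>\<^sub>F n in sequentially. \<forall>i. lam n * x n $ i \<le> f (q *\<^sub>R x n) $ i / q"
    if "0 < q" for q
  proof (intro always_eventually allI)
    fix n i
    show "lam n * x n $ i \<le> f (q *\<^sub>R x n) $ i / q"
      using asymptotic_map_le_scaled[OF _ that, of "x n" i] x prob_simplex_subset_nonneg_orthant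
      by auto
  qed
  obtain r l' x0 where r: "strict_mono r" "(lam \<circ> r) \<longlonglongrightarrow> l'"
    and l': "l' \<in> {0..B}" "x0 \<in> prob_simplex" "f_inf x0 = l' *\<^sub>R x0"
    by (rule eigenpair_limit[OF lam_mem x(1) above below])
  have "l' = l"
    using LIMSEQ_subseq_LIMSEQ[OF lim r(1)] r(2) by (rule LIMSEQ_unique[rotated])
  then show "l \<in> cone_eigenvalues f_inf"
    using l' prob_simplex_subset_nonneg_orthant prob_simplex_nonzero
    by (auto simp: cone_eigenvalues_def)
qed

text \<open>Write \<open>x + t v\<close> as the convex combination \<open>(1 - s) (x / (1 - s)) + s ((t / s) v)\<close>
  and let \<open>s \<rightarrow> 0\<close>.\<close>

lemma add_asymptotic_map_le:
  assumes x: "x \<in> nonneg_orthant" and v: "v \<in> nonneg_orthant" and t: "0 < t"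
  shows "f x $ i + t * f_inf v $ i \<le> f (x + t *\<^sub>R v) $ i"
proof (rule tendsto_upperbound)
  show "((\<lambda>s. (1 - s) * f x $ i + t * f_inf v $ i) \<longlongrightarrow> f x $ i + t * f_inf v $ i) (at_right 0)"
    by (auto intro!: tendsto_eq_intros)
  have "(1 - s) * f x $ i + t * f_inf v $ i \<le> f (x + t *\<^sub>R v) $ i" if s: "0 < s" "s < 1" for s
  proof -
    have x': "(1 / (1 - s)) *\<^sub>R x \<in> nonneg_orthant" and v': "(t / s) *\<^sub>R v \<in> nonneg_orthant"
      using x v s t by (simp_all add: scaleR_mem_nonneg_orthant)
    have "(1 - s) * f x $ i \<le> (1 - s) * f ((1 / (1 - s)) *\<^sub>R x) $ i"
      using x s by (intro mult_left_mono mono_component) (auto simp: mem_nonneg_orthant field_simps)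
    moreover have "t * f_inf v $ i \<le> s * f ((t / s) *\<^sub>R v) $ i"
      using asymptotic_map_le_scaled[OF v, of "t / s" i] s t by (simp add: field_simps)
    moreover have "(1 - s) * f ((1 / (1 - s)) *\<^sub>R x) $ i + (1 - (1 - s)) * f ((t / s) *\<^sub>R v) $ i
        \<le> f (x + t *\<^sub>R v) $ i"
      using concave_component[OF x' v', of "1 - s" i] s by simp
    ultimately show ?thesis
      by simp
  qed
  then show "\<forall>\<^sub>F s in at_right 0. (1 - s) * f x $ i + t * f_inf v $ i \<le> f (x + t *\<^sub>R v) $ i"
    unfolding eventually_at_right_field by (intro exI[of _ 1]) auto
qed simp

lemma eigenvalue_le_contraction_factor:
  assumes xs: "xs \<in> pos_orthant" and fixed: "f xs = xs" and U: "xs \<in> interior U"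
    and c: "0 \<le> c" "c \<le> 1"
    and contr: "\<forall>x\<in>U. \<forall>y\<in>U. thompson (f x) (f y) \<le> c * thompson x y"
    and l: "l \<in> cone_eigenvalues f_inf"
  shows "l \<le> c"
proof -
  from l have "0 \<le> l" and "\<exists>v\<in>nonneg_orthant. v \<noteq> 0 \<and> f_inf v = l *\<^sub>R v"
    by (simp_all add: cone_eigenvalues_def)
  then obtain v where v: "v \<in> nonneg_orthant" "v \<noteq> 0" "f_inf v = l *\<^sub>R v"
    by blast
  from max_ratio_exists[OF xs v(1,2)] obtain m j
    where m: "0 < m" "\<forall>i. v $ i \<le> m * xs $ i" "v $ j = m * xs $ j"
    by blast
  have near: "\<forall>\<^sub>F t in at_right (0 :: real). 0 < t \<and> xs + t *\<^sub>R v \<in> interior U"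
    by (intro eventually_conj eventually_at_right_less topological_tendstoD[OF _ open_interior U])
      (auto intro!: tendsto_eq_intros)
  obtain t where t: "0 < t" "xs + t *\<^sub>R v \<in> U"
    using eventually_happens'[OF trivial_limit_at_right_real near] interior_subset by blast
  define y where "y = xs + t *\<^sub>R v"
  have xs_nonneg: "xs \<in> nonneg_orthant"
    using xs pos_orthant_subset_nonneg_orthant by blast
  have "ln (1 + l * (t * m)) \<le> thompson (f y) xs"
  proof (rule ln_le_thompson[where i = j])
    show "(1 + l * (t * m)) * xs $ j \<le> f y $ j"
      using add_asymptotic_map_le[OF xs_nonneg v(1) t(1), of j] fixed v(3) m(3)
      by (simp add: y_def algebra_simps)
    have "y \<in> nonneg_orthant"
      using xs_nonneg v t by (simp add: y_def mem_nonneg_orthant)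
    then show "f y \<in> nonneg_orthant"
      using pos_component by (simp add: mem_nonneg_orthant less_imp_le)
  qed (use xs t m \<open>0 \<le> l\<close> in \<open>simp_all add: add_pos_nonneg\<close>)
  also have "\<dots> \<le> c * thompson y xs"
    using contr t(2) U interior_subset fixed by (metis subsetD y_def)
  also have "\<dots> \<le> c * ln (1 + t * m)"
    unfolding y_def
    using thompson_add_le[OF xs v(1) less_imp_le[OF t(1)] less_imp_le[OF m(1)] m(2)[rule_format]]
      c(1)
    by (rule mult_left_mono)
  finally show ?thesis
    by (rule le_of_ln_le_mult_ln[OF c mult_pos_pos[OF t(1) m(1)] \<open>0 \<le> l\<close>])
qed

end

theorem proposition4:
  fixes f :: "real^'k \<Rightarrow> real^'k" and xs :: "real^'k" and U :: "(real^'k) set" and c :: real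
  assumes f_maps: "\<forall>x\<in>nonneg_orthant. f x \<in> pos_orthant"
    and f_cont: "continuous_on nonneg_orthant f"
    and f_conc: "cone_concave f"
    and xs_pos: "xs \<in> pos_orthant"
    and xs_fix: "f xs = xs"
    and U_compact: "compact U"
    and U_sub: "U \<subseteq> pos_orthant"
    and U_nbhd: "xs \<in> interior U"
    and c_range: "0 \<le> c" "c < 1"
    and contr: "\<forall>x\<in>U. \<forall>y\<in>U. thompson (f x) (f y) \<le> c * thompson x y"
  shows "c \<ge> cone_spectral_radius (asymptotic_map f)"
proof -
  interpret positive_concave_map f
    using f_maps f_cont f_conc by unfold_locales
  show ?thesis
  proof (rule cone_spectral_radius_le)
    show "closed (cone_eigenvalues (asymptotic_map f))"
      by (rule closed_asymptotic_map_eigenvalues)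
    show "cone_eigenvalues (asymptotic_map f) \<noteq> {}"
      by (rule asymptotic_map_eigenvalues_nonempty)
    show "l \<le> c" if "l \<in> cone_eigenvalues (asymptotic_map f)" for l
      using eigenvalue_le_contraction_factor[OF xs_pos xs_fix U_nbhd _ _ contr that] c_range by simp
  qed
qed

end
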